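(* Let $A$ be a finitely generated algebra over $B=\bigoplus_{s=1}^K\Bbbk e_s$, let $\alpha\in\mathbb N^K$, $N=\sum_s\alpha_s$, $R=\mathcal O(\operatorname{Rep}(A,\alpha))$, and let $Q\in(D_BA)_n$ with associated differential $n$-bracket $\{\!\{-,\ldots,-\}\!\}=\{\!\{-,\ldots,-\}\!\}_Q$. For $x=x^1\otimes\cdots\otimes x^n\in A^{\otimes n}$ set $x_{(u_1v_1,\ldots,u_nv_n)}=x^1_{u_1v_1}\cdots x^n_{u_nv_n}\in R$ (extended linearly). Let $S_{n-1}$ act on $\{2,\ldots,n\}$, extended by $\tilde\sigma(1)=1$. Then for all $a^1,\ldots,a^n\in A$ and indices $u_q,v_q\in\{1,\ldots,N\}$, $$\operatorname{tr}\mathcal X(Q)\big(a^1_{u_1v_1},\ldots,a^n_{u_nv_n}\big)=\sum_{\tilde\sigma\in S_{n-1}}\epsilon(\tilde\sigma)\,\{\!\{a^1,a^{\tilde\sigma(2)},\ldots,a^{\tilde\sigma(n)}\}\!\}_{\tilde\sigma(u,v)},$$ where $\tilde\sigma(u,v)=(u_{\tilde\sigma(n)}v_1,\,u_1v_{\tilde\sigma(2)},\,u_{\tilde\sigma(2)}v_{\tilde\sigma(3)},\ldots,u_{\tilde\sigma(n-1)}v_{\tilde\sigma(n)})$ and $\epsilon(\tilde\sigma)$ is the sign of $\tilde\sigma$.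
   Context: $\Bbbk$ field of characteristic $0$, $\otimes=\otimes_\Bbbk$, $e_se_t=\delta_{st}e_s$, $\sum e_s=1$. Representation space: $R$ is the commutative $\Bbbk$-algebra generated by symbols $a_{ij}$ ($a\in A$, $1\le i,j\le N$) with $(a+b)_{ij}=a_{ij}+b_{ij}$, $(ab)_{ij}=\sum_ka_{ik}b_{kj}$, and $(e_s)_{ij}=\delta_{ij}$ if $\alpha_1+\cdots+\alpha_{s-1}<i,j\le\alpha_1+\cdots+\alpha_s$, $0$ otherwise. $D_{A/B}=\operatorname{Der}_B(A,A\otimes A)$ for the outer structure $x(d'\otimes d'')y=xd'\otimes d''y$, with bimodule structure $(b\delta c)(a)=\delta(a)'c\otimes b\delta(a)''$; $D_BA=T_AD_{A/B}$. For $\delta\in D_{A/B}$, $\delta_{ij}\in\operatorname{Der}(R)$ is defined by $\delta_{ij}(b_{kl})=\delta(b)'_{kj}\delta(b)''_{il}$, and $\mathcal X(\delta)$ is the matrix $(\delta_{ij})$; for $Q=\delta_1\cdots\delta_n$, $\mathcal X(Q)=\mathcal X(\delta_1)\cdots\mathcal X(\delta_n)$ (matrix product with entries multiplied by $\wedge$ in $\bigwedge^n_R\operatorname{Der}(R)$), $\operatorname{tr}\mathcal X(Q)=\sum_i(\mathcal X(Q))_{ii}$, extended linearly. Polyvector fields are evaluated by $(\xi_1\wedge\cdots\wedge\xi_n)(f_1,\ldots,f_n)=\sum_{\sigma\in S_n}\epsilon(\sigma)\xi_1(f_{\sigma(1)})\cdots\xi_n(f_{\sigma(n)})$. With $\tau_\sigma(a_1\otimes\cdots\otimes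 a_n)=a_{\sigma^{-1}(1)}\otimes\cdots\otimes a_{\sigma^{-1}(n)}$, for $Q=\delta_1\cdots\delta_n$ the $n$-bracket is $\{\!\{-,\ldots,-\}\!\}_Q=\sum_{i=0}^{n-1}(-1)^{(n-1)i}\tau^i_{(1\ldots n)}\circ\widetilde{\{\!\{\}\!\}}_Q\circ\tau^{-i}_{(1\ldots n)}$ with $\widetilde{\{\!\{a_1,\ldots,a_n\}\!\}}_Q=\delta_n(a_n)'\delta_1(a_1)''\otimes\delta_1(a_1)'\delta_2(a_2)''\otimes\cdots\otimes\delta_{n-1}(a_{n-1})'\delta_n(a_n)''$, extended linearly in $Q$. *)

theory Defs
  imports Main "HOL-Library.FuncSet" "HOL-Combinatorics.Permutations"
begin

definition k_algebra :: "('k::field \<Rightarrow> 'a::ring_1) \<Rightarrow> bool" where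
  "k_algebra j \<longleftrightarrow>
     (\<forall>c d. j (c + d) = j c + j d) \<and> (\<forall>c d. j (c * d) = j c * j d) \<and> j 1 = 1 \<and>
     (\<forall>c a. j c * a = a * j c)"

text \<open>Complete system of orthogonal idempotents e_1,...,e_K (the image of
B = k e_1 + ... + k e_K in A).\<close>

definition idempotent_system :: "nat \<Rightarrow> (nat \<Rightarrow> 'a::ring_1) \<Rightarrow> bool" where
  "idempotent_system K e \<longleftrightarrow>
     (\<forall>s\<in>{1..K}. \<forall>t\<in>{1..K}. e s * e t = (if s = t then e s else 0)) \<and>
     (\<Sum>s\<in>{1..K}. e s) = 1"

inductive_set subalg_gen :: "('k::field \<Rightarrow> 'a::ring_1) \<Rightarrow> nat \<Rightarrow> (nat \<Rightarrow> 'a) \<Rightarrow> 'a set \<Rightarrow> 'a set"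
  for j K e G where
    gen: "g \<in> G \<Longrightarrow> g \<in> subalg_gen j K e G"
  | scal: "j c \<in> subalg_gen j K e G"
  | idem: "s \<in> {1..K} \<Longrightarrow> e s \<in> subalg_gen j K e G"
  | add: "x \<in> subalg_gen j K e G \<Longrightarrow> y \<in> subalg_gen j K e G \<Longrightarrow> x + y \<in> subalg_gen j K e G"
  | mult: "x \<in> subalg_gen j K e G \<Longrightarrow> y \<in> subalg_gen j K e G \<Longrightarrow> x * y \<in> subalg_gen j K e G"

definition finitely_generated_over_B :: "('k::field \<Rightarrow> 'a::ring_1) \<Rightarrow> nat \<Rightarrow> (nat \<Rightarrow> 'a) \<Rightarrow> bool" where
  "finitely_generated_over_B j K e \<longleftrightarrow> (\<exists>G. finite G \<and> subalg_gen j K e G = UNIV)"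

section \<open>Representation space (functor of points)\<close>

definition ring_hom_k :: "('k::field \<Rightarrow> 'r::comm_ring_1) \<Rightarrow> bool" where
  "ring_hom_k \<iota> \<longleftrightarrow> (\<forall>c d. \<iota> (c + d) = \<iota> c + \<iota> d) \<and> (\<forall>c d. \<iota> (c * d) = \<iota> c * \<iota> d) \<and> \<iota> 1 = 1"

definition blk_off :: "(nat \<Rightarrow> nat) \<Rightarrow> nat \<Rightarrow> nat" where
  "blk_off \<alpha> s = (\<Sum>t\<in>{1..<s}. \<alpha> t)"

text \<open>rho a i j plays the role of the coordinate a_ij; the defining relations of
O(Rep(A,alpha)) hold (indices in 1..N, N = sum of the alpha_s).\<close>

definition is_rep ::
  "('k::field \<Rightarrow> 'a::ring_1) \<Rightarrow> nat \<Rightarrow> (nat \<Rightarrow> 'a) \<Rightarrow> (nat \<Rightarrow> nat) \<Rightarrow>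
   ('k \<Rightarrow> 'r::comm_ring_1) \<Rightarrow> ('a \<Rightarrow> nat \<Rightarrow> nat \<Rightarrow> 'r) \<Rightarrow> bool" where
  "is_rep j K e \<alpha> \<iota> \<rho> \<longleftrightarrow>
     (let N = (\<Sum>s\<in>{1..K}. \<alpha> s) in
     (\<forall>a b. \<forall>i\<in>{1..N}. \<forall>l\<in>{1..N}. \<rho> (a + b) i l = \<rho> a i l + \<rho> b i l) \<and>
     (\<forall>a b. \<forall>i\<in>{1..N}. \<forall>l\<in>{1..N}. \<rho> (a * b) i l = (\<Sum>m\<in>{1..N}. \<rho> a i m * \<rho> b m l)) \<and>
     (\<forall>c a. \<forall>i\<in>{1..N}. \<forall>l\<in>{1..N}. \<rho> (j c * a) i l = \<iota> c * \<rho> a i l) \<and>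
     (\<forall>s\<in>{1..K}. \<forall>i\<in>{1..N}. \<forall>l\<in>{1..N}.
        \<rho> (e s) i l = (if i = l \<and> blk_off \<alpha> s < i \<and> i \<le> blk_off \<alpha> s + \<alpha> s then 1 else 0)))"

text \<open>An element of A \<otimes> A is represented by a finite formal sum of simple tensors
x \<otimes> y (a list of pairs). Two representatives denote the same tensor iff they agree
under all k-bilinear forms f(x)g(y) with f, g k-linear functionals (valid since k is a field).\<close>

definition k_linear_fun :: "('k::field \<Rightarrow> 'a::ring_1) \<Rightarrow> ('a \<Rightarrow> 'k) \<Rightarrow> bool" where
  "k_linear_fun j f \<longleftrightarrow> (\<forall>a b. f (a + b) = f a + f b) \<and> (\<forall>c a. f (j c * a) = c * f a)"

definition teq2 :: "('k::field \<Rightarrow> 'a::ring_1) \<Rightarrow> ('a \<times> 'a) list \<Rightarrow> ('a \<times> 'a) list \<Rightarrow> bool" where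
  "teq2 j xs ys \<longleftrightarrow>
     (\<forall>f g. k_linear_fun j f \<longrightarrow> k_linear_fun j g \<longrightarrow>
        (\<Sum>(x, y)\<leftarrow>xs. f x * g y) = (\<Sum>(x, y)\<leftarrow>ys. f x * g y))"

definition tmul_left :: "'a::ring_1 \<Rightarrow> ('a \<times> 'a) list \<Rightarrow> ('a \<times> 'a) list" where
  "tmul_left a xs = map (\<lambda>(x, y). (a * x, y)) xs"

definition tmul_right :: "('a::ring_1 \<times> 'a) list \<Rightarrow> 'a \<Rightarrow> ('a \<times> 'a) list" where
  "tmul_right xs b = map (\<lambda>(x, y). (x, y * b)) xs"

text \<open>delta is an element of D_{A/B} = Der_B(A, A \<otimes> A) (outer structure): additive,
k-linear, Leibniz rule, and vanishing on B.\<close>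

definition double_der ::
  "('k::field \<Rightarrow> 'a::ring_1) \<Rightarrow> nat \<Rightarrow> (nat \<Rightarrow> 'a) \<Rightarrow> ('a \<Rightarrow> ('a \<times> 'a) list) \<Rightarrow> bool" where
  "double_der j K e \<delta> \<longleftrightarrow>
     (\<forall>a b. teq2 j (\<delta> (a + b)) (\<delta> a @ \<delta> b)) \<and>
     (\<forall>c a. teq2 j (\<delta> (j c * a)) (tmul_left (j c) (\<delta> a))) \<and>
     (\<forall>a b. teq2 j (\<delta> (a * b)) (tmul_right (\<delta> a) b @ tmul_left a (\<delta> b))) \<and>
     (\<forall>c. teq2 j (\<delta> (\<Sum>s\<in>{1..K}. j (c s) * e s)) [])"

text \<open>delta_ij (b_kl) = delta(b)'_kj delta(b)''_il.\<close>

definition vf :: "('a \<Rightarrow> nat \<Rightarrow> nat \<Rightarrow> 'r::comm_ring_1) \<Rightarrow> ('a \<Rightarrow> ('a \<times> 'a) list) \<Rightarrow>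
                 nat \<Rightarrow> nat \<Rightarrow> 'a \<Rightarrow> nat \<Rightarrow> nat \<Rightarrow> 'r" where
  "vf \<rho> \<delta> i j b k l = (\<Sum>(x, y)\<leftarrow>\<delta> b. \<rho> x k j * \<rho> y i l)"

text \<open>For Q = delta_1 ... delta_n (ds q = delta_q, q = 1..n):
tr X(Q) = sum over I_0 = I_n, I_1,...,I_(n-1) in 1..N of
(delta_1)_{I_0 I_1} \<and> ... \<and> (delta_n)_{I_(n-1) I_n}, evaluated on
(f_1,...,f_n), f_q = a^q_{u_q v_q}, by
(xi_1 \<and> ... \<and> xi_n)(f_1..f_n) = sum_sigma sign(sigma) xi_1(f_sigma(1)) ... xi_n(f_sigma(n)).\<close>

definition trX_eval_mono ::
  "('a \<Rightarrow> nat \<Rightarrow> nat \<Rightarrow> 'r::comm_ring_1) \<Rightarrow> nat \<Rightarrow> nat \<Rightarrow> (nat \<Rightarrow> ('a \<Rightarrow> ('a \<times> 'a) list)) \<Rightarrow>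
   (nat \<Rightarrow> 'a) \<Rightarrow> (nat \<Rightarrow> nat) \<Rightarrow> (nat \<Rightarrow> nat) \<Rightarrow> 'r" where
  "trX_eval_mono \<rho> N n ds a u v =
     (\<Sum>I\<in>{I \<in> {0..n} \<rightarrow>\<^sub>E {1..N}. I 0 = I n}.
        \<Sum>\<sigma>\<in>{\<sigma>. \<sigma> permutes {1..n}}.
          of_int (sign \<sigma>) * (\<Prod>q\<in>{1..n}. vf \<rho> (ds q) (I (q - 1)) (I q) (a (\<sigma> q)) (u (\<sigma> q)) (v (\<sigma> q))))"

text \<open>Q in (D_B A)_n as a finite sum of monomials delta_1 ... delta_n; extended linearly.\<close>

definition trX_eval ::
  "('a \<Rightarrow> nat \<Rightarrow> nat \<Rightarrow> 'r::comm_ring_1) \<Rightarrow> nat \<Rightarrow> nat \<Rightarrow> (nat \<Rightarrow> ('a \<Rightarrow> ('a \<times> 'a) list)) list \<Rightarrow>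
   (nat \<Rightarrow> 'a) \<Rightarrow> (nat \<Rightarrow> nat) \<Rightarrow> (nat \<Rightarrow> nat) \<Rightarrow> 'r" where
  "trX_eval \<rho> N n Q a u v = (\<Sum>ds\<leftarrow>Q. trX_eval_mono \<rho> N n ds a u v)"

text \<open>Elements of A^{\<otimes> n}: formal sums of signed simple tensors x^1 \<otimes> ... \<otimes> x^n
(factor q is x q, q = 1..n).\<close>

type_synonym 'a tensn = "(int \<times> (nat \<Rightarrow> 'a)) list"

definition cyc :: "nat \<Rightarrow> nat \<Rightarrow> nat" where
  "cyc n q = (if 1 \<le> q \<and> q < n then q + 1 else if q = n \<and> 1 \<le> n then 1 else q)"

definition tau :: "(nat \<Rightarrow> nat) \<Rightarrow> 'a tensn \<Rightarrow> 'a tensn" where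
  "tau \<sigma> X = map (\<lambda>(c, x). (c, \<lambda>q. x (inv \<sigma> q))) X"

text \<open>tilde-bracket on a simple tensor b^1 \<otimes> ... \<otimes> b^n:
delta_n(b_n)' delta_1(b_1)'' \<otimes> delta_1(b_1)' delta_2(b_2)'' \<otimes> ... \<otimes> delta_(n-1)(b_(n-1))' delta_n(b_n)''
(expanded over all choices of summands of the delta_q(b_q)).\<close>

definition bracket_tilde :: "nat \<Rightarrow> (nat \<Rightarrow> ('a::ring_1 \<Rightarrow> ('a \<times> 'a) list)) \<Rightarrow> (nat \<Rightarrow> 'a) \<Rightarrow> 'a tensn" where
  "bracket_tilde n ds b =
     map (\<lambda>ts. (1, \<lambda>q. if q = 1 then fst (ts ! (n - 1)) * snd (ts ! 0)
                        else fst (ts ! (q - 2)) * snd (ts ! (q - 1))))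
       (product_lists (map (\<lambda>q. ds q (b q)) [1..<n + 1]))"

definition tau_args :: "(nat \<Rightarrow> nat) \<Rightarrow> (nat \<Rightarrow> 'a) \<Rightarrow> (nat \<Rightarrow> 'a)" where
  "tau_args \<sigma> b = (\<lambda>q. b (inv \<sigma> q))"

text \<open>{{-,...,-}}_Q = sum_{i=0}^{n-1} (-1)^{(n-1)i} tau^i \<circ> tilde \<circ> tau^{-i},
tau = tau_{(1...n)}, so tau^i = tau_{c^i} and tau^{-i} = tau_{(c^i)^-1}.\<close>

definition bracket_mono :: "nat \<Rightarrow> (nat \<Rightarrow> ('a::ring_1 \<Rightarrow> ('a \<times> 'a) list)) \<Rightarrow> (nat \<Rightarrow> 'a) \<Rightarrow> 'a tensn" where
  "bracket_mono n ds b =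
     concat (map (\<lambda>i. map (\<lambda>(c, x). ((-1) ^ ((n - 1) * i) * c, x))
                      (tau (cyc n ^^ i) (bracket_tilde n ds (tau_args (inv (cyc n ^^ i)) b))))
             [0..<n])"

definition bracket :: "nat \<Rightarrow> (nat \<Rightarrow> ('a::ring_1 \<Rightarrow> ('a \<times> 'a) list)) list \<Rightarrow> (nat \<Rightarrow> 'a) \<Rightarrow> 'a tensn" where
  "bracket n Q b = concat (map (\<lambda>ds. bracket_mono n ds b) Q)"

definition tens_eval :: "('a \<Rightarrow> nat \<Rightarrow> nat \<Rightarrow> 'r::comm_ring_1) \<Rightarrow> nat \<Rightarrow> 'a tensn \<Rightarrow>
                          (nat \<Rightarrow> nat) \<Rightarrow> (nat \<Rightarrow> nat) \<Rightarrow> 'r" where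
  "tens_eval \<rho> n X p r = (\<Sum>(c, x)\<leftarrow>X. of_int c * (\<Prod>q\<in>{1..n}. \<rho> (x q) (p q) (r q)))"

end

theory Submission
  imports Defs "HOL-Combinatorics.Cycles"
begin

text \<open>
  Let c be the cycle (1 2 ... n). Expanding the wedge product, tr X(Q) evaluated on the coordinate
  functions is an alternating sum over all permutations \<open>\<tau>\<close> of the arguments. For fixed \<open>\<tau>\<close>, the sum
  over the closed chain of matrix indices I_0 = I_n, I_1, ..., I_(n-1) multiplies the matrix of
  delta_q(a)' with that of delta_(q+1)(a)'' (q taken mod n), and what remains is the coordinate
  expression of the tilde bracket of the permuted arguments. On the other side, the n rotated terms in
  the definition of the bracket turn the sum over permutations \<open>\<sigma>\<close> fixing 1 into a sum over all
  \<open>\<sigma> \<circ> c\<^sup>i\<close>, with the sign (-1)^((n-1) i) of \<open>c\<^sup>i\<close>; every permutation is uniquely of this form.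
\<close>

lemma sum_list_concat: "sum_list (concat xss) = sum_list (map sum_list (xss :: 'a::monoid_add list list))"
  by (induction xss) auto

lemma sum_sum_list_swap: "(\<Sum>x\<in>S. \<Sum>y\<leftarrow>ys. f x y) = (\<Sum>y\<leftarrow>ys. \<Sum>x\<in>S. f x y)"
  by (induction ys) (auto simp: sum.distrib)

lemma prod_sum_list_product_lists:
  fixes f :: "nat \<Rightarrow> 'b \<Rightarrow> 'r::comm_semiring_1"
  shows "(\<Prod>q<length xss. \<Sum>x\<leftarrow>xss ! q. f q x) =
         (\<Sum>ys\<leftarrow>product_lists xss. \<Prod>q<length xss. f q (ys ! q))"
proof (induction xss arbitrary: f)
  case Nil
  then show ?case by simp
next
  case (Cons xs xss)
  have "(\<Prod>q<length (xs # xss). \<Sum>x\<leftarrow>(xs # xss) ! q. f q x) =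
        (\<Sum>x\<leftarrow>xs. f 0 x) * (\<Sum>ys\<leftarrow>product_lists xss. \<Prod>q<length xss. f (Suc q) (ys ! q))"
    using Cons.IH[of "\<lambda>q. f (Suc q)"] by (simp only: length_Cons prod.lessThan_Suc_shift) simp
  also have "\<dots> = (\<Sum>x\<leftarrow>xs. \<Sum>ys\<leftarrow>product_lists xss. f 0 x * (\<Prod>q<length xss. f (Suc q) (ys ! q)))"
    by (simp only: sum_list_mult_const[symmetric]) (simp only: sum_list_const_mult)
  also have "\<dots> = (\<Sum>ys\<leftarrow>product_lists (xs # xss). \<Prod>q<length (xs # xss). f q (ys ! q))"
    by (simp only: length_Cons prod.lessThan_Suc_shift product_lists.simps map_concat sum_list_concat
        map_map comp_def nth_Cons_0 nth_Cons_Suc)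
  finally show ?case .
qed

lemma prod_atLeastAtMost_sum_list_product_lists:
  fixes f :: "nat \<Rightarrow> 'b \<Rightarrow> 'r::comm_semiring_1"
  shows "(\<Prod>q\<in>{1..n}. \<Sum>x\<leftarrow>xs q. f q x) =
         (\<Sum>ys\<leftarrow>product_lists (map xs [1..<n+1]). \<Prod>q\<in>{1..n}. f q (ys ! (q - 1)))"
proof -
  define xss where "xss = map xs [1..<n+1]"
  have n: "length xss = n"
    by (simp add: xss_def)
  have "(\<Prod>q\<in>{1..n}. \<Sum>x\<leftarrow>xs q. f q x) = (\<Prod>q<length xss. \<Sum>x\<leftarrow>xss ! q. f (Suc q) x)"
    unfolding n by (simp add: prod.atLeast1_atMost_eq xss_def nth_map del: upt_Suc)
  also have "\<dots> = (\<Sum>ys\<leftarrow>product_lists xss. \<Prod>q<length xss. f (Suc q) (ys ! q))"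
    by (rule prod_sum_list_product_lists)
  also have "\<dots> = (\<Sum>ys\<leftarrow>product_lists xss. \<Prod>q\<in>{1..n}. f q (ys ! (q - 1)))"
    unfolding n by (simp add: prod.atLeast1_atMost_eq)
  finally show ?thesis
    unfolding xss_def .
qed

lemma cyc_permutes: "cyc n permutes {1..n}"
proof (rule bij_imp_permutes)
  show "bij_betw (cyc n) {1..n} {1..n}"
    by (rule bij_betw_byWitness[where f' = "\<lambda>q. if q = 1 then n else q - 1"]) (auto simp: cyc_def)
  show "cyc n q = q" if "q \<notin> {1..n}" for q
    using that by (auto simp: cyc_def)
qed

lemma cyc_Suc: "1 \<le> n \<Longrightarrow> cyc (Suc n) = cyc n \<circ> Transposition.transpose n (Suc n)"
  by (auto simp: cyc_def fun_eq_iff transpose_def)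

lemma sign_cyc: "sign (cyc n) = (-1) ^ (n - 1)"
proof (cases "n = 0")
  case True
  then have "cyc n = id"
    by (auto simp: cyc_def)
  then show ?thesis
    using True by simp
next
  case False
  then have "1 \<le> n"
    by simp
  then show ?thesis
  proof (induction n rule: nat_induct_at_least)
    case base
    have "cyc 1 = id"
      by (auto simp: cyc_def)
    then show ?case
      by simp
  next
    case (Suc n)
    have "permutation (cyc n)"
      using cyc_permutes permutation_permutes by blast
    then have "sign (cyc (Suc n)) = - sign (cyc n)"
      using Suc.hyps by (simp add: cyc_Suc sign_compose permutation_swap_id sign_swap_id)
    also have "\<dots> = (-1) ^ (Suc n - 1)"
      using Suc by (cases n) auto
    finally show ?case .
  qed
qed

lemma sign_funpow_cyc: "sign (cyc n ^^ i) = (-1) ^ ((n - 1) * i)"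
proof (induction i)
  case (Suc i)
  have "permutation (cyc n)" "permutation (cyc n ^^ i)"
    using cyc_permutes permutes_funpow permutation_permutes by blast+
  then have "sign (cyc n ^^ Suc i) = sign (cyc n) * sign (cyc n ^^ i)"
    by (simp only: funpow.simps(2) sign_compose)
  also have "\<dots> = (-1) ^ ((n - 1) * Suc i)"
    using Suc by (simp add: sign_cyc mult_Suc_right power_add)
  finally show ?case .
qed simp

lemma inv_cyc: "q \<in> {1..n} \<Longrightarrow> inv (cyc n) q = (if q = 1 then n else q - 1)"
  by (auto simp: permutes_inv_eq[OF cyc_permutes] cyc_def)

lemma inv_cyc_comp_funpow_cyc: "inv (cyc n) \<circ> (cyc n ^^ i) = (cyc n ^^ i) \<circ> inv (cyc n)"
proof
  fix x
  have c: "cyc n permutes {1..n}"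
    by (rule cyc_permutes)
  obtain y where x: "x = cyc n y"
    using permutes_surj[OF c] by (metis surjD)
  have "inv (cyc n) ((cyc n ^^ i) (cyc n y)) = (cyc n ^^ i) y"
    by (simp add: funpow_swap1[symmetric] permutes_inverses(2)[OF c])
  then show "(inv (cyc n) \<circ> (cyc n ^^ i)) x = ((cyc n ^^ i) \<circ> inv (cyc n)) x"
    using x by (simp add: permutes_inverses(2)[OF c])
qed

lemma funpow_cyc: "q \<in> {1..n} \<Longrightarrow> (cyc n ^^ i) q = (q - 1 + i) mod n + 1"
proof (induction i)
  case (Suc i)
  obtain k where k: "q = Suc k" "k < n"
    using Suc.prems by (cases q) auto
  have "Suc ((k + i) mod n) \<le> n"
    using k by (simp add: Suc_le_eq)
  then show ?case
    using Suc k by (auto simp: cyc_def mod_Suc)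
qed (cases q, auto)

lemma funpow_cyc_inject:
  assumes "q \<in> {1..n}" "i < n" "j < n" "(cyc n ^^ i) q = (cyc n ^^ j) q"
  shows "i = j"
proof -
  have "(q - 1 + i) mod n = (q - 1 + j) mod n"
    using assms(4) funpow_cyc[OF assms(1)] by simp
  then have "int ((q - 1 + i) mod n) = int ((q - 1 + j) mod n)"
    by simp
  then have "(int (q - 1) + int i) mod int n = (int (q - 1) + int j) mod int n"
    by (simp add: zmod_int)
  then have "(int (q - 1) + int i + - int (q - 1)) mod int n = (int (q - 1) + int j + - int (q - 1)) mod int n"
    by (rule mod_add_cong) simp
  then have "int i mod int n = int j mod int n"
    by simp
  then show "i = j"
    using assms(2,3) by simp
qed

lemma bij_betw_comp_funpow_cyc:
  assumes "1 \<le> n"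
  shows "bij_betw (\<lambda>(\<sigma>, i). \<sigma> \<circ> (cyc n ^^ i))
           ({\<sigma>. \<sigma> permutes {2..n}} \<times> {..<n}) {\<tau>. \<tau> permutes {1..n}}"
proof -
  let ?f = "\<lambda>(\<sigma>, i). \<sigma> \<circ> (cyc n ^^ i)"
  have c: "(cyc n ^^ i) permutes {1..n}" for i
    by (rule permutes_funpow[OF cyc_permutes])
  have "inj_on ?f ({\<sigma>. \<sigma> permutes {2..n}} \<times> {..<n})"
  proof (rule inj_onI, clarify)
    fix \<sigma> i \<sigma>' j
    assume \<sigma>: "\<sigma> permutes {2..n}" and \<sigma>': "\<sigma>' permutes {2..n}" and "i < n" "j < n"
      and eq: "\<sigma> \<circ> (cyc n ^^ i) = \<sigma>' \<circ> (cyc n ^^ j)"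
    define q where "q = inv (cyc n ^^ i) 1"
    have q: "q \<in> {1..n}"
      using assms permutes_in_image[OF permutes_inv[OF c]] by (simp add: q_def)
    have ci: "(cyc n ^^ i) q = 1"
      by (simp add: q_def permutes_inverses(1)[OF c])
    have "\<sigma>' ((cyc n ^^ j) q) = \<sigma>' 1"
      using fun_cong[OF eq, of q] ci permutes_not_in[OF \<sigma>, of 1] permutes_not_in[OF \<sigma>', of 1] by simp
    then have "(cyc n ^^ i) q = (cyc n ^^ j) q"
      using ci permutes_inj[OF \<sigma>'] by (simp add: inj_eq)
    then have ij: "i = j"
      using funpow_cyc_inject q \<open>i < n\<close> \<open>j < n\<close> by blast
    have "\<sigma> = \<sigma>'"
    proof
      fix x
      obtain y where "x = (cyc n ^^ i) y"
        using permutes_surj[OF c] by (metis surjD)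
      then show "\<sigma> x = \<sigma>' x"
        using fun_cong[OF eq, of y] ij by simp
    qed
    with ij show "\<sigma> = \<sigma>' \<and> i = j"
      by simp
  qed
  moreover have "?f ` ({\<sigma>. \<sigma> permutes {2..n}} \<times> {..<n}) \<subseteq> {\<tau>. \<tau> permutes {1..n}}"
  proof clarify
    fix \<sigma> i
    assume "\<sigma> permutes {2..n}"
    then have "\<sigma> permutes {1..n}"
      by (rule permutes_subset) auto
    then show "\<sigma> \<circ> (cyc n ^^ i) permutes {1..n}"
      using c by (rule permutes_compose[rotated])
  qed
  moreover have "card ({\<sigma>. \<sigma> permutes {2..n}} \<times> {..<n}) = card {\<tau>. \<tau> permutes {1..n}}"
    using assms by (simp add: card_cartesian_product card_permutations fact_reduce)
  ultimately show ?thesis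
    unfolding bij_betw_def by (metis card_image card_subset_eq finite_permutations finite_atLeastAtMost)
qed

lemma sum_permutes_eq_sum_comp_funpow_cyc:
  assumes "1 \<le> n"
  shows "(\<Sum>\<tau> | \<tau> permutes {1..n}. f \<tau>) = (\<Sum>\<sigma> | \<sigma> permutes {2..n}. \<Sum>i<n. f (\<sigma> \<circ> (cyc n ^^ i)))"
proof -
  have "(\<Sum>\<sigma> | \<sigma> permutes {2..n}. \<Sum>i<n. f (\<sigma> \<circ> (cyc n ^^ i))) =
        (\<Sum>(\<sigma>, i) \<in> {\<sigma>. \<sigma> permutes {2..n}} \<times> {..<n}. f (\<sigma> \<circ> (cyc n ^^ i)))"
    by (rule sum.cartesian_product)
  also have "\<dots> = (\<Sum>\<tau> | \<tau> permutes {1..n}. f \<tau>)"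
    using sum.reindex_bij_betw[OF bij_betw_comp_funpow_cyc[OF assms], of f]
    by (simp add: case_prod_beta')
  finally show ?thesis ..
qed

lemma sum_cyclic_indices_prod_entries:
  fixes \<rho> :: "'a::ring_1 \<Rightarrow> nat \<Rightarrow> nat \<Rightarrow> 'r::comm_ring_1"
  assumes mult: "\<And>x y i l. i \<in> {1..N} \<Longrightarrow> l \<in> {1..N} \<Longrightarrow> \<rho> (x * y) i l = (\<Sum>m\<in>{1..N}. \<rho> x i m * \<rho> y m l)"
    and n: "1 \<le> n"
    and U: "\<And>q. q \<in> {1..n} \<Longrightarrow> U q \<in> {1..N}"
    and V: "\<And>q. q \<in> {1..n} \<Longrightarrow> V q \<in> {1..N}"
  shows "(\<Sum>I\<in>{I \<in> {0..n} \<rightarrow>\<^sub>E {1..N}. I 0 = I n}. \<Prod>q\<in>{1..n}. \<rho> (X q) (U q) (I q) * \<rho> (Y q) (I (q - 1)) (V q)) =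
         (\<Prod>q\<in>{1..n}. \<rho> (X q * Y (cyc n q)) (U q) (V (cyc n q)))"
proof -
  define g where "g J = (\<Prod>q\<in>{1..n}. \<rho> (X q) (U q) (J q) * \<rho> (Y (cyc n q)) (J q) (V (cyc n q)))" for J
  have closed_path: "(\<Prod>q\<in>{1..n}. \<rho> (X q) (U q) (J' q) * \<rho> (Y q) (J' (q - 1)) (V q)) = g J"
    if "J' = J(0 := J n)" for J J'
  proof -
    have shift: "J' (cyc n q - 1) = J q" if "q \<in> {1..n}" for q
      using that \<open>J' = J(0 := J n)\<close> by (auto simp: cyc_def)
    \<comment> \<open>shift the second factors along \<open>cyc n\<close> so that both factors of index q read \<open>J q\<close>\<close>
    have "(\<Prod>q\<in>{1..n}. \<rho> (Y q) (J' (q - 1)) (V q)) =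
          (\<Prod>q\<in>{1..n}. \<rho> (Y (cyc n q)) (J' (cyc n q - 1)) (V (cyc n q)))"
      using prod.permute[OF cyc_permutes, of "\<lambda>q. \<rho> (Y q) (J' (q - 1)) (V q)"] by (simp add: comp_def)
    also have "\<dots> = (\<Prod>q\<in>{1..n}. \<rho> (Y (cyc n q)) (J q) (V (cyc n q)))"
      using shift by (intro prod.cong refl) presburger
    moreover have "(\<Prod>q\<in>{1..n}. \<rho> (X q) (U q) (J' q)) = (\<Prod>q\<in>{1..n}. \<rho> (X q) (U q) (J q))"
      using \<open>J' = J(0 := J n)\<close> by simp
    ultimately show ?thesis
      by (simp add: g_def prod.distrib)
  qed
  have "(\<Sum>I\<in>{I \<in> {0..n} \<rightarrow>\<^sub>E {1..N}. I 0 = I n}. \<Prod>q\<in>{1..n}. \<rho> (X q) (U q) (I q) * \<rho> (Y q) (I (q - 1)) (V q)) =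
        (\<Sum>J\<in>{1..n} \<rightarrow>\<^sub>E {1..N}. g J)"
  proof (rule sum.reindex_bij_witness[where i = "\<lambda>J. J(0 := J n)" and j = "\<lambda>I. restrict I {1..n}"])
    fix I
    assume I: "I \<in> {I \<in> {0..n} \<rightarrow>\<^sub>E {1..N}. I 0 = I n}"
    show I_eq: "(restrict I {1..n})(0 := restrict I {1..n} n) = I"
      using I n by (auto simp: fun_eq_iff PiE_def extensional_def)
    show "restrict I {1..n} \<in> {1..n} \<rightarrow>\<^sub>E {1..N}"
      using I by auto
    show "g (restrict I {1..n}) = (\<Prod>q\<in>{1..n}. \<rho> (X q) (U q) (I q) * \<rho> (Y q) (I (q - 1)) (V q))"
      using closed_path[OF I_eq[symmetric]] by simp
  next
    fix J
    assume J: "J \<in> {1..n} \<rightarrow>\<^sub>E {1..N}"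
    show "restrict (J(0 := J n)) {1..n} = J"
      using J by (auto simp: fun_eq_iff PiE_def extensional_def)
    show "J(0 := J n) \<in> {I \<in> {0..n} \<rightarrow>\<^sub>E {1..N}. I 0 = I n}"
      using J n by (auto simp: PiE_def Pi_def extensional_def)
  qed
  also have "\<dots> = (\<Prod>q\<in>{1..n}. \<Sum>m\<in>{1..N}. \<rho> (X q) (U q) m * \<rho> (Y (cyc n q)) m (V (cyc n q)))"
    unfolding g_def by (rule prod_sum_PiE[symmetric]) auto
  also have "\<dots> = (\<Prod>q\<in>{1..n}. \<rho> (X q * Y (cyc n q)) (U q) (V (cyc n q)))"
    using U V permutes_in_image[OF cyc_permutes] by (simp add: mult)
  finally show ?thesis .
qed

lemma tens_eval_concat: "tens_eval \<rho> n (concat Xs) P R = (\<Sum>X\<leftarrow>Xs. tens_eval \<rho> n X P R)"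
  by (induction Xs) (auto simp: tens_eval_def)

lemma tens_eval_scale: "tens_eval \<rho> n (map (\<lambda>(c, x). (s * c, x)) X) P R = of_int s * tens_eval \<rho> n X P R"
  by (induction X) (auto simp: tens_eval_def algebra_simps)

lemma tens_eval_cong:
  assumes "\<And>q. q \<in> {1..n} \<Longrightarrow> P q = P' q" "\<And>q. q \<in> {1..n} \<Longrightarrow> R q = R' q"
  shows "tens_eval \<rho> n X P R = tens_eval \<rho> n X P' R'"
  using assms unfolding tens_eval_def by (intro arg_cong[where f = sum_list] map_cong refl) auto

lemma tens_eval_tau:
  assumes "\<pi> permutes {1..n}"
  shows "tens_eval \<rho> n (tau \<pi> X) P R = tens_eval \<rho> n X (P \<circ> \<pi>) (R \<circ> \<pi>)"
proof -
  have "(\<Prod>q\<in>{1..n}. \<rho> (x (inv \<pi> q)) (P q) (R q)) = (\<Prod>q\<in>{1..n}. \<rho> (x q) (P (\<pi> q)) (R (\<pi> q)))" for x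
    using prod.permute[OF assms, of "\<lambda>q. \<rho> (x (inv \<pi> q)) (P q) (R q)"]
    by (simp add: permutes_inverses(2)[OF assms])
  then show ?thesis
    by (simp add: tens_eval_def tau_def split_def comp_def)
qed

text \<open>Reindexed along \<open>cyc n\<close>, the q-th factor pairs \<open>\<delta>\<^sub>q(b\<^sub>q)'\<close> with \<open>\<delta>\<^sub>q\<^sub>+\<^sub>1(b\<^sub>q\<^sub>+\<^sub>1)''\<close> (indices mod n).\<close>

lemma tens_eval_bracket_tilde:
  fixes \<rho> :: "'a::ring_1 \<Rightarrow> nat \<Rightarrow> nat \<Rightarrow> 'r::comm_ring_1"
  shows "tens_eval \<rho> n (bracket_tilde n ds b) P R =
         (\<Sum>ts\<leftarrow>product_lists (map (\<lambda>q. ds q (b q)) [1..<n+1]).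
            \<Prod>q\<in>{1..n}. \<rho> (fst (ts ! (q - 1)) * snd (ts ! (cyc n q - 1))) (P (cyc n q)) (R (cyc n q)))"
proof -
  define F where "F ts q = (if q = 1 then fst (ts ! (n - 1)) * snd (ts ! 0)
                            else fst (ts ! (q - 2)) * snd (ts ! (q - 1)))" for ts :: "('a \<times> 'a) list" and q
  have "(\<Prod>q\<in>{1..n}. \<rho> (F ts q) (P q) (R q)) =
        (\<Prod>q\<in>{1..n}. \<rho> (fst (ts ! (q - 1)) * snd (ts ! (cyc n q - 1))) (P (cyc n q)) (R (cyc n q)))" for ts
  proof -
    have "F ts (cyc n q) = fst (ts ! (q - 1)) * snd (ts ! (cyc n q - 1))" if "q \<in> {1..n}" for q
      using that by (auto simp: F_def cyc_def numeral_2_eq_2)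
    then show ?thesis
      using prod.permute[OF cyc_permutes, of "\<lambda>q. \<rho> (F ts q) (P q) (R q)"] by (simp add: comp_def)
  qed
  moreover have "tens_eval \<rho> n (bracket_tilde n ds b) P R =
     (\<Sum>ts\<leftarrow>product_lists (map (\<lambda>q. ds q (b q)) [1..<n+1]). \<Prod>q\<in>{1..n}. \<rho> (F ts q) (P q) (R q))"
    by (simp add: tens_eval_def bracket_tilde_def F_def comp_def del: upt_Suc)
  ultimately show ?thesis
    by simp
qed

lemma sum_cyclic_indices_vf_eq_bracket_tilde:
  fixes \<rho> :: "'a::ring_1 \<Rightarrow> nat \<Rightarrow> nat \<Rightarrow> 'r::comm_ring_1"
  assumes mult: "\<And>x y i l. i \<in> {1..N} \<Longrightarrow> l \<in> {1..N} \<Longrightarrow> \<rho> (x * y) i l = (\<Sum>m\<in>{1..N}. \<rho> x i m * \<rho> y m l)"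
    and n: "1 \<le> n"
    and U: "\<And>q. q \<in> {1..n} \<Longrightarrow> U q \<in> {1..N}"
    and V: "\<And>q. q \<in> {1..n} \<Longrightarrow> V q \<in> {1..N}"
  shows "(\<Sum>I\<in>{I \<in> {0..n} \<rightarrow>\<^sub>E {1..N}. I 0 = I n}. \<Prod>q\<in>{1..n}. vf \<rho> (ds q) (I (q - 1)) (I q) (b q) (U q) (V q)) =
         tens_eval \<rho> n (bracket_tilde n ds b) (U \<circ> inv (cyc n)) V"
proof -
  let ?C = "{I \<in> {0..n} \<rightarrow>\<^sub>E {1..N}. I 0 = I n}"
  let ?PL = "product_lists (map (\<lambda>q. ds q (b q)) [1..<n+1])"
  have "(\<Sum>I\<in>?C. \<Prod>q\<in>{1..n}. vf \<rho> (ds q) (I (q - 1)) (I q) (b q) (U q) (V q)) =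
        (\<Sum>I\<in>?C. \<Sum>ts\<leftarrow>?PL. \<Prod>q\<in>{1..n}.
           \<rho> (fst (ts ! (q - 1))) (U q) (I q) * \<rho> (snd (ts ! (q - 1))) (I (q - 1)) (V q))"
    unfolding vf_def split_def by (rule sum.cong[OF refl], rule prod_atLeastAtMost_sum_list_product_lists)
  also have "\<dots> = (\<Sum>ts\<leftarrow>?PL. \<Sum>I\<in>?C. \<Prod>q\<in>{1..n}.
           \<rho> (fst (ts ! (q - 1))) (U q) (I q) * \<rho> (snd (ts ! (q - 1))) (I (q - 1)) (V q))"
    by (rule sum_sum_list_swap)
  also have "\<dots> = (\<Sum>ts\<leftarrow>?PL. \<Prod>q\<in>{1..n}.
           \<rho> (fst (ts ! (q - 1)) * snd (ts ! (cyc n q - 1))) (U q) (V (cyc n q)))"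
    by (simp only: sum_cyclic_indices_prod_entries[OF mult n U V])
  also have "\<dots> = tens_eval \<rho> n (bracket_tilde n ds b) (U \<circ> inv (cyc n)) V"
    by (simp add: tens_eval_bracket_tilde permutes_inverses(2)[OF cyc_permutes] del: upt_Suc)
  finally show ?thesis .
qed

lemma trX_eval_mono_eq_sum_permutes_bracket_tilde:
  fixes \<rho> :: "'a::ring_1 \<Rightarrow> nat \<Rightarrow> nat \<Rightarrow> 'r::comm_ring_1"
  assumes mult: "\<And>x y i l. i \<in> {1..N} \<Longrightarrow> l \<in> {1..N} \<Longrightarrow> \<rho> (x * y) i l = (\<Sum>m\<in>{1..N}. \<rho> x i m * \<rho> y m l)"
    and n: "1 \<le> n"
    and u: "\<And>q. q \<in> {1..n} \<Longrightarrow> u q \<in> {1..N}"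
    and v: "\<And>q. q \<in> {1..n} \<Longrightarrow> v q \<in> {1..N}"
  shows "trX_eval_mono \<rho> N n ds a u v =
         (\<Sum>\<tau> | \<tau> permutes {1..n}.
            of_int (sign \<tau>) * tens_eval \<rho> n (bracket_tilde n ds (a \<circ> \<tau>)) (u \<circ> \<tau> \<circ> inv (cyc n)) (v \<circ> \<tau>))"
proof -
  let ?C = "{I \<in> {0..n} \<rightarrow>\<^sub>E {1..N}. I 0 = I n}"
  have cyclic_sum: "(\<Sum>I\<in>?C. \<Prod>q\<in>{1..n}. vf \<rho> (ds q) (I (q - 1)) (I q) (a (\<tau> q)) (u (\<tau> q)) (v (\<tau> q))) =
        tens_eval \<rho> n (bracket_tilde n ds (a \<circ> \<tau>)) (u \<circ> \<tau> \<circ> inv (cyc n)) (v \<circ> \<tau>)"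
    if \<tau>: "\<tau> permutes {1..n}" for \<tau>
  proof -
    have U: "(u \<circ> \<tau>) q \<in> {1..N}" and V: "(v \<circ> \<tau>) q \<in> {1..N}" if "q \<in> {1..n}" for q
      using u v permutes_in_image[OF \<tau>] that by auto
    from sum_cyclic_indices_vf_eq_bracket_tilde[OF mult n, where U = "u \<circ> \<tau>" and V = "v \<circ> \<tau>" and ds = ds and b = "a \<circ> \<tau>"]
    show ?thesis
      using U V by simp
  qed
  have "trX_eval_mono \<rho> N n ds a u v =
        (\<Sum>\<tau> | \<tau> permutes {1..n}. \<Sum>I\<in>?C.
           of_int (sign \<tau>) * (\<Prod>q\<in>{1..n}. vf \<rho> (ds q) (I (q - 1)) (I q) (a (\<tau> q)) (u (\<tau> q)) (v (\<tau> q))))"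
    unfolding trX_eval_mono_def by (rule sum.swap)
  also have "\<dots> = (\<Sum>\<tau> | \<tau> permutes {1..n}. of_int (sign \<tau>) *
           (\<Sum>I\<in>?C. \<Prod>q\<in>{1..n}. vf \<rho> (ds q) (I (q - 1)) (I q) (a (\<tau> q)) (u (\<tau> q)) (v (\<tau> q))))"
    by (simp only: sum_distrib_left)
  also have "\<dots> = (\<Sum>\<tau> | \<tau> permutes {1..n}.
       of_int (sign \<tau>) * tens_eval \<rho> n (bracket_tilde n ds (a \<circ> \<tau>)) (u \<circ> \<tau> \<circ> inv (cyc n)) (v \<circ> \<tau>))"
    by (rule sum.cong[OF refl]) (simp only: mem_Collect_eq cyclic_sum)
  finally show ?thesis .
qed

lemma tens_eval_bracket_mono:
  "tens_eval \<rho> n (bracket_mono n ds b) P R =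
   (\<Sum>i<n. of_int ((-1) ^ ((n - 1) * i)) *
      tens_eval \<rho> n (bracket_tilde n ds (b \<circ> (cyc n ^^ i))) (P \<circ> (cyc n ^^ i)) (R \<circ> (cyc n ^^ i)))"
proof -
  have c: "(cyc n ^^ i) permutes {1..n}" for i
    by (rule permutes_funpow[OF cyc_permutes])
  have "tau_args (inv (cyc n ^^ i)) b = b \<circ> (cyc n ^^ i)" for i
    using permutes_bij[OF c] by (simp add: tau_args_def inv_inv_eq comp_def)
  then show ?thesis
    by (simp add: bracket_mono_def tens_eval_concat tens_eval_scale tens_eval_tau[OF c] comp_def
        sum_list_map_eq_sum_count atLeast0LessThan flip: sum_set_upt_conv_sum_list_nat)
qed

lemma sum_permutes_bracket_mono_eq_sum_permutes_bracket_tilde: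
  assumes n: "1 \<le> n"
  shows "(\<Sum>\<sigma> | \<sigma> permutes {2..n}.
            of_int (sign \<sigma>) * tens_eval \<rho> n (bracket_mono n ds (a \<circ> \<sigma>)) (u \<circ> \<sigma> \<circ> inv (cyc n)) (v \<circ> \<sigma>)) =
         (\<Sum>\<tau> | \<tau> permutes {1..n}.
            of_int (sign \<tau>) * tens_eval \<rho> n (bracket_tilde n ds (a \<circ> \<tau>)) (u \<circ> \<tau> \<circ> inv (cyc n)) (v \<circ> \<tau>))"
    (is "?lhs = (\<Sum>\<tau> | \<tau> permutes {1..n}. ?F \<tau>)")
proof -
  have "of_int (sign \<sigma>) * tens_eval \<rho> n (bracket_mono n ds (a \<circ> \<sigma>)) (u \<circ> \<sigma> \<circ> inv (cyc n)) (v \<circ> \<sigma>) =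
        (\<Sum>i<n. ?F (\<sigma> \<circ> (cyc n ^^ i)))" if \<sigma>: "\<sigma> permutes {2..n}" for \<sigma>
  proof -
    have "permutation \<sigma>" "permutation (cyc n ^^ i)" for i
      using \<sigma> permutes_funpow[OF cyc_permutes] permutation_permutes by blast+
    then have "sign (\<sigma> \<circ> (cyc n ^^ i)) = sign \<sigma> * (-1) ^ ((n - 1) * i)" for i
      by (simp add: sign_compose sign_funpow_cyc)
    moreover have "u \<circ> \<sigma> \<circ> inv (cyc n) \<circ> (cyc n ^^ i) = u \<circ> (\<sigma> \<circ> (cyc n ^^ i)) \<circ> inv (cyc n)" for i
      by (simp add: comp_assoc inv_cyc_comp_funpow_cyc)
    ultimately show ?thesis
      by (simp add: tens_eval_bracket_mono sum_distrib_left o_assoc mult.assoc)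
  qed
  then have "?lhs = (\<Sum>\<sigma> | \<sigma> permutes {2..n}. \<Sum>i<n. ?F (\<sigma> \<circ> (cyc n ^^ i)))"
    by (intro sum.cong) simp_all
  also have "\<dots> = (\<Sum>\<tau> | \<tau> permutes {1..n}. ?F \<tau>)"
    by (rule sum_permutes_eq_sum_comp_funpow_cyc[OF n, symmetric])
  finally show ?thesis .
qed

lemma trX_eval_mono_eq_sum_permutes_bracket_mono:
  fixes \<rho> :: "'a::ring_1 \<Rightarrow> nat \<Rightarrow> nat \<Rightarrow> 'r::comm_ring_1"
  assumes mult: "\<And>x y i l. i \<in> {1..N} \<Longrightarrow> l \<in> {1..N} \<Longrightarrow> \<rho> (x * y) i l = (\<Sum>m\<in>{1..N}. \<rho> x i m * \<rho> y m l)"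
    and n: "1 \<le> n"
    and u: "\<And>q. q \<in> {1..n} \<Longrightarrow> u q \<in> {1..N}"
    and v: "\<And>q. q \<in> {1..n} \<Longrightarrow> v q \<in> {1..N}"
  shows "trX_eval_mono \<rho> N n ds a u v =
         (\<Sum>\<sigma>\<in>{\<sigma>. \<sigma> permutes {2..n}}.
            of_int (sign \<sigma>) *
            tens_eval \<rho> n (bracket_mono n ds (\<lambda>q. a (\<sigma> q)))
              (\<lambda>q. if q = 1 then u (\<sigma> n) else u (\<sigma> (q - 1)))
              (\<lambda>q. v (\<sigma> q)))"
proof -
  have shift: "tens_eval \<rho> n X (u \<circ> \<sigma> \<circ> inv (cyc n)) R =
               tens_eval \<rho> n X (\<lambda>q. if q = 1 then u (\<sigma> n) else u (\<sigma> (q - 1))) R" for X \<sigma> R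
    by (rule tens_eval_cong) (simp_all add: inv_cyc)
  have "trX_eval_mono \<rho> N n ds a u v = (\<Sum>\<tau> | \<tau> permutes {1..n}.
      of_int (sign \<tau>) * tens_eval \<rho> n (bracket_tilde n ds (a \<circ> \<tau>)) (u \<circ> \<tau> \<circ> inv (cyc n)) (v \<circ> \<tau>))"
    by (rule trX_eval_mono_eq_sum_permutes_bracket_tilde[OF mult n u v])
  also have "\<dots> = (\<Sum>\<sigma> | \<sigma> permutes {2..n}.
      of_int (sign \<sigma>) * tens_eval \<rho> n (bracket_mono n ds (a \<circ> \<sigma>)) (u \<circ> \<sigma> \<circ> inv (cyc n)) (v \<circ> \<sigma>))"
    by (rule sum_permutes_bracket_mono_eq_sum_permutes_bracket_tilde[OF n, symmetric])
  also have "\<dots> = (\<Sum>\<sigma> | \<sigma> permutes {2..n}. of_int (sign \<sigma>) * tens_eval \<rho> n (bracket_mono n ds (a \<circ> \<sigma>))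
      (\<lambda>q. if q = 1 then u (\<sigma> n) else u (\<sigma> (q - 1))) (v \<circ> \<sigma>))"
    by (simp only: shift)
  finally show ?thesis
    by (simp only: comp_def)
qed

lemma tens_eval_bracket: "tens_eval \<rho> n (bracket n Q b) P R = (\<Sum>ds\<leftarrow>Q. tens_eval \<rho> n (bracket_mono n ds b) P R)"
  by (simp add: bracket_def tens_eval_concat comp_def)

theorem lemma5p2:
  fixes j :: "'k::field_char_0 \<Rightarrow> 'a::ring_1"
    and K :: nat and e :: "nat \<Rightarrow> 'a" and \<alpha> :: "nat \<Rightarrow> nat"
    and \<iota> :: "'k \<Rightarrow> 'r::comm_ring_1" and \<rho> :: "'a \<Rightarrow> nat \<Rightarrow> nat \<Rightarrow> 'r"
    and n :: nat and Q :: "(nat \<Rightarrow> ('a \<Rightarrow> ('a \<times> 'a) list)) list"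
    and a :: "nat \<Rightarrow> 'a" and u v :: "nat \<Rightarrow> nat"
  assumes "k_algebra j"
    and "idempotent_system K e"
    and "finitely_generated_over_B j K e"
    and "ring_hom_k \<iota>"
    and "is_rep j K e \<alpha> \<iota> \<rho>"
    and "1 \<le> n"
    and "\<forall>ds\<in>set Q. \<forall>q\<in>{1..n}. double_der j K e (ds q)"
    and "\<forall>q\<in>{1..n}. u q \<in> {1..(\<Sum>s\<in>{1..K}. \<alpha> s)} \<and> v q \<in> {1..(\<Sum>s\<in>{1..K}. \<alpha> s)}"
  shows "trX_eval \<rho> (\<Sum>s\<in>{1..K}. \<alpha> s) n Q a u v =
         (\<Sum>\<sigma>\<in>{\<sigma>. \<sigma> permutes {2..n}}.
            of_int (sign \<sigma>) *
            tens_eval \<rho> n (bracket n Q (\<lambda>q. a (\<sigma> q)))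
              (\<lambda>q. if q = 1 then u (\<sigma> n) else u (\<sigma> (q - 1)))
              (\<lambda>q. v (\<sigma> q)))"
proof -
  define N where "N = (\<Sum>s\<in>{1..K}. \<alpha> s)"
  have mult: "\<And>x y i l. i \<in> {1..N} \<Longrightarrow> l \<in> {1..N} \<Longrightarrow> \<rho> (x * y) i l = (\<Sum>m\<in>{1..N}. \<rho> x i m * \<rho> y m l)"
    using assms(5) unfolding is_rep_def Let_def N_def by blast
  have u: "\<And>q. q \<in> {1..n} \<Longrightarrow> u q \<in> {1..N}" and v: "\<And>q. q \<in> {1..n} \<Longrightarrow> v q \<in> {1..N}"
    using assms(8) unfolding N_def by blast+
  have "trX_eval \<rho> N n Q a u v =
        (\<Sum>ds\<leftarrow>Q. \<Sum>\<sigma>\<in>{\<sigma>. \<sigma> permutes {2..n}}. of_int (sign \<sigma>) *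
           tens_eval \<rho> n (bracket_mono n ds (\<lambda>q. a (\<sigma> q)))
             (\<lambda>q. if q = 1 then u (\<sigma> n) else u (\<sigma> (q - 1))) (\<lambda>q. v (\<sigma> q)))"
    by (simp only: trX_eval_def trX_eval_mono_eq_sum_permutes_bracket_mono[OF mult assms(6) u v])
  also have "\<dots> = (\<Sum>\<sigma>\<in>{\<sigma>. \<sigma> permutes {2..n}}. of_int (sign \<sigma>) *
           tens_eval \<rho> n (bracket n Q (\<lambda>q. a (\<sigma> q)))
             (\<lambda>q. if q = 1 then u (\<sigma> n) else u (\<sigma> (q - 1))) (\<lambda>q. v (\<sigma> q)))"
    by (simp only: sum_sum_list_swap[symmetric] sum_list_const_mult tens_eval_bracket)
  finally show ?thesis
    unfolding N_def .
qed

end
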